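(* Let $f\equiv 1$ and let $g:(0,1]\to(0,\infty)$ be arbitrary. Then the voting scheme $(f,g)$ is not fair for all sample sizes $k$: there exists $k\ge 1$ such that, with sample size $k$, the fairness condition $v_i=v_{i_1}+v_{i_2}$ fails for some network, node and splitting ratio.
   Context: A network consists of $N$ nodes with weights $m_1,\dots,m_N>0$, $\sum_{i=1}^N m_i=1$. A voting scheme is a pair of functions $(f,g)$ from $(0,1]$ to $(0,\infty)$. In each query round a node samples $k\ge 1$ nodes independently with replacement, node $j$ being chosen with probability $p_j=f(m_j)/\sum_{i=1}^N f(m_i)$; each opinion of node $j$ is weighted by $g_j=g(m_j)$. The voting power of node $i$ is $$v_i=\sum_{\mathbf y\in\mathbb N^N:\ y_1+\dots+y_N=k}\frac{k!}{y_1!\cdots y_N!}\,\frac{y_i g_i}{\sum_{n=1}^N y_n g_n}\prod_{j=1}^N p_j^{y_j},$$ where $\mathbb N=\{0,1,2,\dots\}$. Splitting: node $i$ of weight $m_i$ is replaced by two nodes $i_1,i_2$ of weights $x m_i$ and $(1-x)m_i$, $x\in(0,1)$, all other nodes unchanged; $v_{i_1},v_{i_2}$ denote the voting powers in the new network (with the same $k$). The scheme is fair for sample size $k$ if $v_i=v_{i_1}+v_{i_2}$ for every network, every node $i$ and every $x\in(0,1)$. *)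

theory Defs
  imports Complex_Main
begin

definition network :: "nat \<Rightarrow> (nat \<Rightarrow> real) \<Rightarrow> bool" where
  "network N m \<longleftrightarrow> (\<forall>i<N. 0 < m i) \<and> (\<Sum>i<N. m i) = 1"

definition occ :: "nat \<Rightarrow> nat \<Rightarrow> (nat \<Rightarrow> nat) set" where
  "occ N k = {y. (\<forall>j\<ge>N. y j = 0) \<and> (\<Sum>j<N. y j) = k}"

definition prob :: "(real \<Rightarrow> real) \<Rightarrow> nat \<Rightarrow> (nat \<Rightarrow> real) \<Rightarrow> nat \<Rightarrow> real" where
  "prob f N m j = f (m j) / (\<Sum>i<N. f (m i))"

definition vpower :: "(real \<Rightarrow> real) \<Rightarrow> (real \<Rightarrow> real) \<Rightarrow> nat \<Rightarrow> nat \<Rightarrow> (nat \<Rightarrow> real) \<Rightarrow> nat \<Rightarrow> real" where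
  "vpower f g N k m i =
     (\<Sum>y\<in>occ N k. (fact k / (\<Prod>j<N. fact (y j)))
        * (real (y i) * g (m i) / (\<Sum>n<N. real (y n) * g (m n)))
        * (\<Prod>j<N. prob f N m j ^ y j))"

text \<open>Splitting node i (of an N-node network) with ratio x: node i_1 keeps index i and gets
  weight x * m i, node i_2 is appended with index N and weight (1-x) * m i.\<close>
definition split_node :: "nat \<Rightarrow> (nat \<Rightarrow> real) \<Rightarrow> nat \<Rightarrow> real \<Rightarrow> (nat \<Rightarrow> real)" where
  "split_node N m i x = m(i := x * m i, N := (1 - x) * m i)"

definition fair :: "(real \<Rightarrow> real) \<Rightarrow> (real \<Rightarrow> real) \<Rightarrow> nat \<Rightarrow> bool" where
  "fair f g k \<longleftrightarrow>
     (\<forall>N m i x. network N m \<and> i < N \<and> 0 < x \<and> x < 1 \<longrightarrow>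
        vpower f g N k m i =
          vpower f g (Suc N) k (split_node N m i x) i + vpower f g (Suc N) k (split_node N m i x) N)"

end

theory Submission
  imports Defs
begin

text \<open>With a single sample the voting power of a node is just its sampling probability. For f = 1 this probability is 1/N: splitting a node of a 2-node
  network turns its power 1/2 into 1/3 + 1/3.\<close>

definition unit_occ :: "nat \<Rightarrow> nat \<Rightarrow> nat" where
  "unit_occ j = (\<lambda>n. if n = j then 1 else 0)"

lemma inj_unit_occ: "inj unit_occ"
  unfolding inj_def unit_occ_def by (metis zero_neq_one)

lemma occ_one: "occ N 1 = unit_occ ` {..<N}"
proof
  show "unit_occ ` {..<N} \<subseteq> occ N 1"
    by (auto simp: occ_def unit_occ_def sum.delta)
next
  show "occ N 1 \<subseteq> unit_occ ` {..<N}"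
  proof
    fix y assume "y \<in> occ N 1"
    hence outside: "\<forall>j\<ge>N. y j = 0" and total: "(\<Sum>j<N. y j) = 1"
      by (auto simp: occ_def)
    obtain j where j: "j < N" "y j \<noteq> 0"
      using total by (metis lessThan_iff sum.neutral zero_neq_one)
    have "(\<Sum>n<N. y n) = y j + (\<Sum>n\<in>{..<N}-{j}. y n)"
      using j by (simp add: sum.remove)
    hence "y j = 1" and rest: "(\<Sum>n\<in>{..<N}-{j}. y n) = 0"
      using total j by linarith+
    have "y n = unit_occ j n" for n
      by (cases "n < N") (use \<open>y j = 1\<close> rest outside in \<open>auto simp: unit_occ_def\<close>)
    hence "y = unit_occ j" ..
    thus "y \<in> unit_occ ` {..<N}" using j by auto
  qed
qed

lemma vpower_one_sample:
  assumes "i < N" and "g (m i) \<noteq> 0"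
  shows "vpower f g N 1 m i = prob f N m i"
proof -
  have summand: "(fact 1 / (\<Prod>n<N. fact (unit_occ j n)))
        * (real (unit_occ j i) * g (m i) / (\<Sum>n<N. real (unit_occ j n) * g (m n)))
        * (\<Prod>n<N. prob f N m n ^ unit_occ j n) = (if j = i then prob f N m i else 0)"
    if "j < N" for j
  proof -
    have "(\<Prod>n<N. (fact (unit_occ j n) :: real)) = 1"
      by (rule prod.neutral) (simp add: unit_occ_def)
    moreover have "(\<Prod>n<N. prob f N m n ^ unit_occ j n) = prob f N m j"
      using that by (simp add: unit_occ_def prod.delta if_distrib[of "\<lambda>e. _ ^ e"] cong: if_cong)
    moreover have "(\<Sum>n<N. real (unit_occ j n) * g (m n)) = g (m j)"
      using that by (simp add: unit_occ_def if_distrib[of real] if_distrib[of "\<lambda>c. c * _"] sum.delta cong: if_cong)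
    ultimately show ?thesis
      using assms by (simp add: unit_occ_def)
  qed
  have "vpower f g N 1 m i = (\<Sum>j<N. if j = i then prob f N m i else 0)"
    unfolding vpower_def occ_one sum.reindex[OF inj_on_subset[OF inj_unit_occ subset_UNIV]]
    by (rule sum.cong) (simp_all only: summand lessThan_iff o_def)
  also have "\<dots> = prob f N m i"
    using assms by simp
  finally show ?thesis .
qed

lemma prob_uniform: "i < N \<Longrightarrow> prob (\<lambda>_. 1) N m i = 1 / real N"
  by (simp add: prob_def)

theorem theorem2:
  fixes g :: "real \<Rightarrow> real"
  assumes "\<forall>t. 0 < t \<and> t \<le> 1 \<longrightarrow> 0 < g t"
  shows "\<exists>k\<ge>1. \<not> fair (\<lambda>_. 1) g k"
proof (intro exI conjI)
  define m :: "nat \<Rightarrow> real" where "m = (\<lambda>_. 1/2)"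
  define m' where "m' = split_node 2 m 0 (1/2)"
  have g_nonzero: "g (1/2) \<noteq> 0" "g (1/4) \<noteq> 0"
    using assms[rule_format, of "1/2"] assms[rule_format, of "1/4"] by auto
  have net: "network 2 m"
    by (simp add: network_def m_def)
  have before: "vpower (\<lambda>_. 1) g 2 1 m 0 = 1/2"
    using vpower_one_sample[of 0 2 g m] prob_uniform[of 0 2] g_nonzero by (simp add: m_def)
  have after: "vpower (\<lambda>_. 1) g 3 1 m' i = 1/3" if "i \<in> {0, 2}" for i
    using vpower_one_sample[of i 3 g m'] prob_uniform[of i 3] g_nonzero that
    by (auto simp: m'_def m_def split_node_def)
  show "\<not> fair (\<lambda>_. 1) g 1"
  proof
    assume "fair (\<lambda>_. 1) g 1"
    hence "vpower (\<lambda>_. 1) g 2 1 m 0 = vpower (\<lambda>_. 1) g (Suc 2) 1 m' 0 + vpower (\<lambda>_. 1) g (Suc 2) 1 m' 2"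
      using net unfolding fair_def m'_def by (elim allE[of _ 2] allE[of _ m] allE[of _ 0] allE[of _ "1/2"]) simp
    thus False
      using before after[of 0] after[of 2] by simp
  qed
qed (simp)

end
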